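(* Let $n\ge 1$ be an integer and let $U_{6n}=\langle a,b : a^{2n}=b^3=1,\ a^{-1}ba=b^{-1}\rangle$ (a group of order $6n$). Let $\Gamma_{U_{6n}}$ be its non-commuting graph. Then the spectrum of the distance matrix $D(\Gamma_{U_{6n}})$ (eigenvalues counted with multiplicity, multiplicities being added if two of the listed values coincide) consists of: (a) $-2$ with multiplicity $5n-4$; (b) $n-2$ with multiplicity $2$; (c) $(4n-2)+n\sqrt{6}$ and $(4n-2)-n\sqrt{6}$, each with multiplicity $1$.
   Context: For a finite non-abelian group $G$ with centre $Z(G)$, the non-commuting graph $\Gamma_G$ is the simple undirected graph with vertex set $G\setminus Z(G)$, in which two distinct vertices $u,v$ are adjacent if and only if $uv\ne vu$. For a connected graph $H$, $d_{uv}$ denotes the length of a shortest path between vertices $u$ and $v$, and the distance matrix $D(H)$ is the matrix whose $(u,v)$-entry is $d_{uv}$. *)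

theory Defs
  imports "HOL-Algebra.Generated_Groups" "Jordan_Normal_Form.Char_Poly"
begin

definition grp_centre :: "('g, 'm) monoid_scheme \<Rightarrow> 'g set" where
  "grp_centre G = {z \<in> carrier G. \<forall>x \<in> carrier G. x \<otimes>\<^bsub>G\<^esub> z = z \<otimes>\<^bsub>G\<^esub> x}"

definition nc_vertices :: "('g, 'm) monoid_scheme \<Rightarrow> 'g set" where
  "nc_vertices G = carrier G - grp_centre G"

definition nc_adj :: "('g, 'm) monoid_scheme \<Rightarrow> 'g \<Rightarrow> 'g \<Rightarrow> bool" where
  "nc_adj G u v \<longleftrightarrow> u \<in> nc_vertices G \<and> v \<in> nc_vertices G \<and> u \<noteq> v \<and>
     u \<otimes>\<^bsub>G\<^esub> v \<noteq> v \<otimes>\<^bsub>G\<^esub> u"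

definition nc_walk :: "('g, 'm) monoid_scheme \<Rightarrow> 'g list \<Rightarrow> bool" where
  "nc_walk G xs \<longleftrightarrow> xs \<noteq> [] \<and> set xs \<subseteq> nc_vertices G \<and>
     (\<forall>i. Suc i < length xs \<longrightarrow> nc_adj G (xs ! i) (xs ! Suc i))"

text \<open>Graph distance: length of a shortest walk (used only for connected graphs).\<close>
definition nc_dist :: "('g, 'm) monoid_scheme \<Rightarrow> 'g \<Rightarrow> 'g \<Rightarrow> nat" where
  "nc_dist G u v = (LEAST k. \<exists>xs. nc_walk G xs \<and> hd xs = u \<and> last xs = v \<and> length xs = Suc k)"

definition nc_dist_matrix :: "('g, 'm) monoid_scheme \<Rightarrow> nat \<Rightarrow> (nat \<Rightarrow> 'g) \<Rightarrow> real mat" where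
  "nc_dist_matrix G N f = mat N N (\<lambda>(i, j). real (nc_dist G (f i) (f j)))"

end

theory Submission
  imports Defs
begin

text \<open>
  Every element of \<open>U\<^sub>6\<^sub>n\<close> is uniquely \<open>a\<^sup>k b\<^sup>j\<close> with \<open>k < 2n\<close>, \<open>j < 3\<close>, and
  \<open>b\<^sup>j a = a b\<^sup>2\<^sup>j\<close>. Hence the centre is \<open>{a\<^sup>k | k even}\<close>, and two non-central elements commute
  iff they lie in the same one of four classes: \<open>{a\<^sup>k b\<^sup>j | k even, j \<noteq> 0}\<close> of size \<open>2n\<close> and, for each
  \<open>j\<close>, \<open>{a\<^sup>k b\<^sup>j | k odd}\<close> of size \<open>n\<close>. So the non-commuting graph is complete 4-partite, all
  distances are 1 or 2, and the distance matrix is \<open>D = J + B - 2I\<close> with \<open>B\<close> the block matrix of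
  the partition. A difference of two vertices of one part is an eigenvector of \<open>D\<close> for \<open>-2\<close>;
  on vectors constant on the parts \<open>D\<close> acts as the \<open>4 \<times> 4\<close> quotient matrix, with eigenvalues
  \<open>4n - 2 \<plusminus> n\<surd>6\<close> and \<open>n - 2\<close> (twice). These eigenvectors form a basis, whose inverse is
  written down explicitly.
\<close>

section \<open>Distance matrices of complete multipartite graphs\<close>

definition multipartite_dist_mat :: "nat \<Rightarrow> (nat \<Rightarrow> nat) \<Rightarrow> real mat" where
  "multipartite_dist_mat N cl = mat N N (\<lambda>(i, j). if i = j then 0 else if cl i = cl j then 2 else 1)"

lemma index_mult_mat_sum:
  assumes "A \<in> carrier_mat N N" "B \<in> carrier_mat N N" "i < N" "j < N"
  shows "(A * B) $$ (i, j) = (\<Sum>l<N. A $$ (i, l) * B $$ (l, j))"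
  using assms by (auto simp: scalar_prod_def atLeast0LessThan intro!: sum.cong)

lemma sum_by_class:
  fixes N k :: nat and cl :: "nat \<Rightarrow> nat" and g :: "nat \<Rightarrow> 'b::comm_semiring_1"
  assumes "\<And>i. i < N \<Longrightarrow> cl i < k"
  shows "(\<Sum>i<N. g (cl i)) = (\<Sum>c<k. of_nat (card {i. i < N \<and> cl i = c}) * g c)"
proof -
  have "(\<Sum>i<N. g (cl i)) = (\<Sum>c<k. \<Sum>i\<in>{i \<in> {..<N}. cl i = c}. g (cl i))"
    using assms by (intro sum.group[symmetric]) auto
  also have "\<dots> = (\<Sum>c<k. of_nat (card {i. i < N \<and> cl i = c}) * g c)"
    by (intro sum.cong refl) (simp add: Collect_conj_eq Int_commute lessThan_def)
  finally show ?thesis .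
qed

lemma sum_delta_diff:
  fixes j r N :: nat and y :: "nat \<Rightarrow> 'b::comm_ring_1"
  assumes "j < N" "r < N"
  shows "(\<Sum>i<N. y i * ((if i = j then 1 else 0) - (if i = r then 1 else 0))) = y j - y r"
  using assms by (simp add: right_diff_distrib sum_subtractf if_distrib[of "(*) _"] cong: if_cong)


lemma sum_class_delta:
  fixes N :: nat and cl :: "nat \<Rightarrow> nat" and t :: "'b::field"
  assumes "k < N"
  shows "(\<Sum>i<N. ((if i = k then 1 else 0) - (if cl i = cl k then t else 0)) * x i)
    = x k - t * (\<Sum>i | i < N \<and> cl i = cl k. x i)"
  using assms by (simp add: left_diff_distrib sum_subtractf sum_distrib_left if_distrib[of "\<lambda>y. y * _"]
      sum.inter_filter[symmetric] cong: if_cong)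

lemma multipartite_dist_mat_mult_index:
  assumes "B \<in> carrier_mat N N" "i < N" "j < N"
  shows "(multipartite_dist_mat N cl * B) $$ (i, j) =
    (\<Sum>l<N. B $$ (l, j)) + (\<Sum>l | l < N \<and> cl l = cl i. B $$ (l, j)) - 2 * B $$ (i, j)"
proof -
  have "(multipartite_dist_mat N cl * B) $$ (i, j) =
      (\<Sum>l<N. (1 + (if cl i = cl l then 1 else 0) - 2 * (if i = l then 1 else 0)) * B $$ (l, j))"
    using assms by (subst index_mult_mat_sum[of _ N])
      (auto simp: multipartite_dist_mat_def intro!: sum.cong)
  also have "\<dots> = (\<Sum>l<N. B $$ (l, j)) + (\<Sum>l | l < N \<and> cl l = cl i. B $$ (l, j)) - 2 * B $$ (i, j)"
    using assms by (simp add: distrib_right left_diff_distrib sum.distrib sum_subtractf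
        sum.inter_filter[symmetric] eq_commute[of "cl i"] mult.assoc if_distrib[of "\<lambda>x. x * _"]
        flip: sum_distrib_left)
  finally show ?thesis .
qed

lemma char_poly_mat_diag: "char_poly (mat_diag n f) = (\<Prod>i<n. [:- f i, 1:])"
proof -
  have "diag_mat (mat_diag n f) = map f [0..<n]"
    by (simp add: diag_mat_def mat_diag_def)
  then show ?thesis
    by (simp add: char_poly_upper_triangular[of _ n] upper_triangular_def mat_diag_def
        prod.distinct_set_conv_list[symmetric] atLeast0LessThan o_def)
qed

text \<open>
  The vectors \<open>u e\<close> are
  eigenvectors, for the eigenvalues \<open>\<theta> e\<close>, of the quotient matrix
  \<open>M d c = s c + (if d = c then s c - 2 else 0)\<close>, and the \<open>w d\<close> form the basis dual to them
  for the inner product weighted by \<open>s\<close>.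
\<close>

locale multipartite_eigenbasis =
  fixes N k :: nat and cl r :: "nat \<Rightarrow> nat" and s \<theta> :: "nat \<Rightarrow> real" and u w :: "nat \<Rightarrow> nat \<Rightarrow> real"
  assumes cl_less: "\<And>i. i < N \<Longrightarrow> cl i < k"
    and rep_less: "\<And>c. c < k \<Longrightarrow> r c < N"
    and cl_rep: "\<And>c. c < k \<Longrightarrow> cl (r c) = c"
    and class_size: "\<And>c. c < k \<Longrightarrow> real (card {i. i < N \<and> cl i = c}) = s c"
    and biorthogonal: "\<And>d e. d < k \<Longrightarrow> e < k \<Longrightarrow>
      (\<Sum>c<k. s c * (w d c * u e c)) = (if d = e then 1 else 0)"
    and eigen: "\<And>d e. d < k \<Longrightarrow> e < k \<Longrightarrow>
      (\<Sum>c<k. s c * u e c) + (s d - 2) * u e d = \<theta> e * u e d"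
begin

definition is_rep :: "nat \<Rightarrow> bool" where
  "is_rep i \<longleftrightarrow> i = r (cl i)"

text \<open>
  The column of a representative lifts an eigenvector of the quotient matrix; any other
  column \<open>j\<close> is the difference of the unit vectors at \<open>j\<close> and at \<open>r (cl j)\<close>, an eigenvector
  for \<open>-2\<close>.
\<close>

definition eigvec_mat :: "real mat" where
  "eigvec_mat = mat N N (\<lambda>(i, j). if is_rep j then u (cl j) (cl i)
     else (if i = j then 1 else 0) - (if i = r (cl j) then 1 else 0))"

definition eigvec_mat_inv :: "real mat" where
  "eigvec_mat_inv = mat N N (\<lambda>(j, i). if is_rep j then w (cl j) (cl i)
     else (if i = j then 1 else 0) - (if cl i = cl j then 1 / s (cl j) else 0))"

definition eigval :: "nat \<Rightarrow> real" where
  "eigval j = (if is_rep j then \<theta> (cl j) else -2)"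

lemma rep_eq_iff: "is_rep i \<Longrightarrow> is_rep j \<Longrightarrow> i = j \<longleftrightarrow> cl i = cl j"
  unfolding is_rep_def by metis

lemma is_rep_rep: "c < k \<Longrightarrow> is_rep (r c)"
  by (simp add: is_rep_def cl_rep)

lemma sum_over_classes: "(\<Sum>i<N. g (cl i)) = (\<Sum>c<k. s c * g c)"
  using sum_by_class[of N cl k g, OF cl_less] by (simp add: class_size)

lemma class_size_pos:
  assumes "i < N"
  shows "s (cl i) > 0"
proof -
  have "card {l. l < N \<and> cl l = cl i} > 0"
    using assms by (subst card_gt_0_iff) auto
  then show ?thesis
    using class_size[OF cl_less[OF assms]] by simp
qed

lemma rep_of_class: "j < N \<Longrightarrow> r (cl j) < N \<and> cl (r (cl j)) = cl j"
  using rep_less cl_rep cl_less by auto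

lemma rep_row_mult_eigvec_mat:
  assumes rep_i: "is_rep i" and i: "i < N" and j: "j < N"
  shows "(\<Sum>l<N. eigvec_mat_inv $$ (i, l) * eigvec_mat $$ (l, j)) = (if i = j then 1 else 0)"
proof -
  have "(\<Sum>l<N. eigvec_mat_inv $$ (i, l) * eigvec_mat $$ (l, j)) =
      (\<Sum>l<N. w (cl i) (cl l) * eigvec_mat $$ (l, j))"
    using rep_i i by (simp add: eigvec_mat_inv_def)
  also have "\<dots> = (if i = j then 1 else 0)"
  proof (cases "is_rep j")
    case True
    then show ?thesis
      using rep_i i j sum_over_classes[of "\<lambda>c. w (cl i) c * u (cl j) c"]
      by (simp add: eigvec_mat_def biorthogonal cl_less rep_eq_iff)
  next
    case False
    then show ?thesis
      using rep_i i j rep_of_class[OF j] by (auto simp: eigvec_mat_def sum_delta_diff)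
  qed
  finally show ?thesis .
qed

lemma nonrep_row_mult_eigvec_mat:
  assumes nonrep_i: "\<not> is_rep i" and i: "i < N" and j: "j < N"
  shows "(\<Sum>l<N. eigvec_mat_inv $$ (i, l) * eigvec_mat $$ (l, j)) = (if i = j then 1 else 0)"
proof -
  have "(\<Sum>l<N. eigvec_mat_inv $$ (i, l) * eigvec_mat $$ (l, j)) =
      eigvec_mat $$ (i, j) - 1 / s (cl i) * (\<Sum>l | l < N \<and> cl l = cl i. eigvec_mat $$ (l, j))"
    using nonrep_i i sum_class_delta[OF i, where cl = cl and t = "1 / s (cl i)" and x = "\<lambda>l. eigvec_mat $$ (l, j)"]
    by (simp add: eigvec_mat_inv_def)
  also have "\<dots> = (if i = j then 1 else 0)"
  proof (cases "is_rep j")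
    case True
    then have "(\<Sum>l | l < N \<and> cl l = cl i. eigvec_mat $$ (l, j)) = s (cl i) * u (cl j) (cl i)"
      using j class_size[OF cl_less[OF i]] by (simp add: eigvec_mat_def)
    then show ?thesis
      using True nonrep_i i j class_size_pos[OF i] by (auto simp: eigvec_mat_def)
  next
    case False
    then have "(\<Sum>l | l < N \<and> cl l = cl i. eigvec_mat $$ (l, j)) = 0"
      using j rep_of_class[OF j] by (simp add: eigvec_mat_def sum_subtractf)
    moreover have "i \<noteq> r (cl j)"
      using nonrep_i rep_of_class[OF j] by (auto simp: is_rep_def)
    ultimately show ?thesis
      using False i j by (simp add: eigvec_mat_def)
  qed
  finally show ?thesis .
qed

lemma eigvec_mat_inv_mult_eigvec_mat: "eigvec_mat_inv * eigvec_mat = 1\<^sub>m N"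
proof (rule eq_matI)
  fix i j assume "i < dim_row (1\<^sub>m N :: real mat)" "j < dim_col (1\<^sub>m N :: real mat)"
  then have i: "i < N" and j: "j < N" by auto
  have "(eigvec_mat_inv * eigvec_mat) $$ (i, j) =
      (\<Sum>l<N. eigvec_mat_inv $$ (i, l) * eigvec_mat $$ (l, j))"
    using i j by (intro index_mult_mat_sum) (auto simp: eigvec_mat_inv_def eigvec_mat_def)
  also have "\<dots> = (if i = j then 1 else 0)"
    using rep_row_mult_eigvec_mat[OF _ i j] nonrep_row_mult_eigvec_mat[OF _ i j] by blast
  finally show "(eigvec_mat_inv * eigvec_mat) $$ (i, j) = 1\<^sub>m N $$ (i, j)"
    using i j by simp
qed (auto simp: eigvec_mat_def eigvec_mat_inv_def)

lemma eigvec_mat_carrier: "eigvec_mat \<in> carrier_mat N N"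
  by (simp add: eigvec_mat_def)

lemma multipartite_dist_mat_mult_eigvec_mat:
  "multipartite_dist_mat N cl * eigvec_mat = eigvec_mat * mat_diag N eigval"
proof (rule eq_matI)
  fix i j assume "i < dim_row (eigvec_mat * mat_diag N eigval)" "j < dim_col (eigvec_mat * mat_diag N eigval)"
  then have i: "i < N" and j: "j < N" by (auto simp: eigvec_mat_def mat_diag_def)
  have "(multipartite_dist_mat N cl * eigvec_mat) $$ (i, j) = (\<Sum>l<N. eigvec_mat $$ (l, j))
      + (\<Sum>l | l < N \<and> cl l = cl i. eigvec_mat $$ (l, j)) - 2 * eigvec_mat $$ (i, j)"
    by (rule multipartite_dist_mat_mult_index[OF eigvec_mat_carrier i j])
  also have "\<dots> = eigvec_mat $$ (i, j) * eigval j"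
  proof (cases "is_rep j")
    case True
    have entry: "eigvec_mat $$ (i, j) = u (cl j) (cl i)"
      using True i j by (simp add: eigvec_mat_def)
    have sum_all: "(\<Sum>l<N. eigvec_mat $$ (l, j)) = (\<Sum>c<k. s c * u (cl j) c)"
      using True j sum_over_classes[of "u (cl j)"] by (simp add: eigvec_mat_def)
    have sum_class: "(\<Sum>l | l < N \<and> cl l = cl i. eigvec_mat $$ (l, j)) = s (cl i) * u (cl j) (cl i)"
      using True j class_size[OF cl_less[OF i]] by (simp add: eigvec_mat_def)
    show ?thesis
      unfolding entry sum_all sum_class using True eigen[OF cl_less[OF i] cl_less[OF j]]
      by (simp add: eigval_def algebra_simps)
  next
    case False
    then show ?thesis
      using i j rep_of_class[OF j] by (simp add: eigvec_mat_def eigval_def sum_subtractf)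
  qed
  also have "\<dots> = (eigvec_mat * mat_diag N eigval) $$ (i, j)"
    using i j by (simp add: mat_diag_mult_right[OF eigvec_mat_carrier])
  finally show "(multipartite_dist_mat N cl * eigvec_mat) $$ (i, j) = (eigvec_mat * mat_diag N eigval) $$ (i, j)" .
qed (auto simp: eigvec_mat_def multipartite_dist_mat_def mat_diag_def)

lemma similar_multipartite_dist_mat_diag: "similar_mat (multipartite_dist_mat N cl) (mat_diag N eigval)"
proof -
  have carrier: "eigvec_mat_inv \<in> carrier_mat N N" "multipartite_dist_mat N cl \<in> carrier_mat N N"
    by (auto simp: eigvec_mat_inv_def multipartite_dist_mat_def)
  have right_inv: "eigvec_mat * eigvec_mat_inv = 1\<^sub>m N"
    by (rule mat_mult_left_right_inverse[OF carrier(1) eigvec_mat_carrier eigvec_mat_inv_mult_eigvec_mat])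
  have "multipartite_dist_mat N cl = multipartite_dist_mat N cl * (eigvec_mat * eigvec_mat_inv)"
    using carrier by (simp add: right_inv)
  also have "\<dots> = eigvec_mat * mat_diag N eigval * eigvec_mat_inv"
    using carrier eigvec_mat_carrier
    by (simp add: assoc_mult_mat[symmetric, of _ N N _ N] multipartite_dist_mat_mult_eigvec_mat)
  finally show ?thesis
    unfolding similar_mat_def
    using carrier eigvec_mat_carrier right_inv eigvec_mat_inv_mult_eigvec_mat
    by (intro exI[of _ eigvec_mat] exI[of _ eigvec_mat_inv] similar_mat_witI) auto
qed

lemma char_poly_multipartite_dist_mat:
  "char_poly (multipartite_dist_mat N cl) = [:2, 1:] ^ (N - k) * (\<Prod>e<k. [:- \<theta> e, 1:])"
proof -
  have reps: "r ` {..<k} \<subseteq> {..<N}" and inj: "inj_on r {..<k}"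
    using rep_less cl_rep by (auto intro!: inj_onI) metis
  have "char_poly (multipartite_dist_mat N cl) = (\<Prod>i<N. [:- eigval i, 1:])"
    by (simp add: char_poly_similar[OF similar_multipartite_dist_mat_diag] char_poly_mat_diag)
  also have "\<dots> = (\<Prod>i\<in>{..<N} - r ` {..<k}. [:- eigval i, 1:]) * (\<Prod>i\<in>r ` {..<k}. [:- eigval i, 1:])"
    by (rule prod.subset_diff[OF reps]) simp
  also have "(\<Prod>i\<in>{..<N} - r ` {..<k}. [:- eigval i, 1:]) = (\<Prod>i\<in>{..<N} - r ` {..<k}. [:2, 1:])"
    by (intro prod.cong refl) (auto simp: eigval_def is_rep_def cl_less)
  also have "\<dots> = [:2, 1:] ^ (N - k)"
    using reps inj by (simp add: card_Diff_subset card_image)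
  also have "(\<Prod>i\<in>r ` {..<k}. [:- eigval i, 1:]) = (\<Prod>e<k. [:- \<theta> e, 1:])"
    using inj by (simp add: prod.reindex eigval_def is_rep_rep cl_rep)
  finally show ?thesis .
qed

end

text \<open>
  For class sizes \<open>2m, m, m, m\<close> the quotient matrix has the eigenvectors \<open>(\<plusminus>\<surd>6/2, 1, 1, 1)\<close>
  (\<open>\<alpha> = \<plusminus>\<surd>6/2\<close> solves \<open>2m\<alpha>\<^sup>2 = 3m\<close>) and \<open>(0, 1, -1, 0)\<close>, \<open>(0, 1, 0, -1)\<close>.
\<close>

definition eigval_2m_m_m_m :: "nat \<Rightarrow> nat \<Rightarrow> real" where
  "eigval_2m_m_m_m m e =
    (if e = 0 then 4 * real m - 2 + m * sqrt 6 else if e = 1 then 4 * real m - 2 - m * sqrt 6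
     else real m - 2)"

definition eigvec_2m_m_m_m :: "nat \<Rightarrow> nat \<Rightarrow> real" where
  "eigvec_2m_m_m_m e c =
    (if e = 0 then (if c = 0 then sqrt 6 / 2 else 1)
     else if e = 1 then (if c = 0 then - sqrt 6 / 2 else 1)
     else if e = 2 then (if c = 1 then 1 else if c = 2 then -1 else 0)
     else (if c = 1 then 1 else if c = 3 then -1 else 0))"

definition dual_2m_m_m_m :: "nat \<Rightarrow> nat \<Rightarrow> nat \<Rightarrow> real" where
  "dual_2m_m_m_m m d c =
    (if d = 0 then (if c = 0 then 1 / (2 * m * sqrt 6) else 1 / (6 * m))
     else if d = 1 then (if c = 0 then - 1 / (2 * m * sqrt 6) else 1 / (6 * m))
     else if d = 2 then (if c = 0 then 0 else 1 / (3 * m)) - (if c = 2 then 1 / m else 0)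
     else (if c = 0 then 0 else 1 / (3 * m)) - (if c = 3 then 1 / m else 0))"

lemma sum_lessThan_4: "(\<Sum>c<4. f c) = f 0 + f 1 + f 2 + f 3" for f :: "nat \<Rightarrow> 'a::comm_monoid_add"
  by (simp add: eval_nat_numeral add.assoc)

lemma multipartite_eigenbasis_2m_m_m_m:
  fixes N m :: nat and cl r :: "nat \<Rightarrow> nat"
  assumes m: "m \<ge> 1" and cl_less: "\<And>i. i < N \<Longrightarrow> cl i < 4" and r: "\<And>c. c < 4 \<Longrightarrow> r c < N \<and> cl (r c) = c"
    and class_sizes: "\<And>c. c < 4 \<Longrightarrow> card {i. i < N \<and> cl i = c} = (if c = 0 then 2 * m else m)"
  shows "multipartite_eigenbasis N 4 cl r (\<lambda>c. if c = 0 then 2 * real m else real m)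
    (eigval_2m_m_m_m m) eigvec_2m_m_m_m (dual_2m_m_m_m m)"
proof
  have cases4: "c = 0 \<or> c = 1 \<or> c = 2 \<or> c = 3" if "c < 4" for c :: nat
    using that by auto
  have "real m > 0"
    using m by simp
  fix d e :: nat assume "d < 4" "e < 4"
  then show "(\<Sum>c<4. (if c = 0 then 2 * real m else real m) * (dual_2m_m_m_m m d c * eigvec_2m_m_m_m e c))
      = (if d = e then 1 else 0)"
    and "(\<Sum>c<4. (if c = 0 then 2 * real m else real m) * eigvec_2m_m_m_m e c)
      + ((if d = 0 then 2 * real m else real m) - 2) * eigvec_2m_m_m_m e d
      = eigval_2m_m_m_m m e * eigvec_2m_m_m_m e d"
    using cases4[of d] cases4[of e] \<open>real m > 0\<close>
    by (auto simp: sum_lessThan_4 dual_2m_m_m_m_def eigvec_2m_m_m_m_def eigval_2m_m_m_m_def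
        field_simps)
qed (use cl_less r class_sizes in auto)

lemma prod_mset_linear_factors:
  "(\<Prod>x\<in>#replicate_mset k c + replicate_mset 2 d + {#p, q#}. [:- x, 1:]) =
    [:- c, 1:] ^ k * ([:- p, 1:] * [:- q, 1:] * [:- d, 1:] ^ 2)"
  by (simp only: image_mset_union image_replicate_mset image_mset_add_mset image_mset_empty
      prod_mset.union prod_mset_replicate_mset prod_mset.add_mset prod_mset.empty
      mult_1_left mult_1_right mult_ac)

lemma char_poly_multipartite_dist_mat_2m_m_m_m:
  fixes N m :: nat and cl :: "nat \<Rightarrow> nat"
  assumes m: "m \<ge> 1" and cl_less: "\<And>i. i < N \<Longrightarrow> cl i < 4"
    and class_sizes: "\<And>c. c < 4 \<Longrightarrow> card {i. i < N \<and> cl i = c} = (if c = 0 then 2 * m else m)"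
  shows "char_poly (multipartite_dist_mat N cl) =
    (\<Prod>x\<in>#replicate_mset (5 * m - 4) (-2) + replicate_mset 2 (real m - 2)
        + {#4 * real m - 2 + real m * sqrt 6, 4 * real m - 2 - real m * sqrt 6#}. [:- x, 1:])"
proof -
  have "\<forall>c. \<exists>i. c < 4 \<longrightarrow> i < N \<and> cl i = c"
  proof
    fix c
    have "c < 4 \<Longrightarrow> card {i. i < N \<and> cl i = c} > 0"
      using class_sizes[of c] m by simp
    then show "\<exists>i. c < 4 \<longrightarrow> i < N \<and> cl i = c"
      by (cases "c < 4") (auto simp: card_gt_0_iff)
  qed
  then obtain r where r: "\<And>c. c < 4 \<Longrightarrow> r c < N \<and> cl (r c) = c"
    by metis
  interpret multipartite_eigenbasis N 4 cl r "\<lambda>c. if c = 0 then 2 * real m else real m"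
    "eigval_2m_m_m_m m" eigvec_2m_m_m_m "dual_2m_m_m_m m"
    by (rule multipartite_eigenbasis_2m_m_m_m[OF m cl_less r class_sizes])
  have "N = (\<Sum>c<4. card {i. i < N \<and> cl i = c} * 1)"
    using sum_by_class[of N cl 4 "\<lambda>_. 1::nat", OF cl_less] by simp
  then have N: "N - 4 = 5 * m - 4"
    using class_sizes[of 0] class_sizes[of 1] class_sizes[of 2] class_sizes[of 3] by (simp add: sum_lessThan_4)
  have "eigval_2m_m_m_m m 0 = 4 * real m - 2 + m * sqrt 6" "eigval_2m_m_m_m m 1 = 4 * real m - 2 - m * sqrt 6"
    "eigval_2m_m_m_m m 2 = real m - 2" "eigval_2m_m_m_m m 3 = real m - 2"
    by (simp_all add: eigval_2m_m_m_m_def)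
  moreover have "(\<Prod>e<4. g e) = g 0 * g 1 * g 2 * g 3" for g :: "nat \<Rightarrow> real poly"
    by (simp add: eval_nat_numeral mult_ac)
  ultimately have "(\<Prod>e<4. [:- eigval_2m_m_m_m m e, 1:]) = [:- (4 * real m - 2 + m * sqrt 6), 1:]
      * [:- (4 * real m - 2 - m * sqrt 6), 1:] * [:- (real m - 2), 1:] ^ 2"
    by (simp only: power2_eq_square mult.assoc)
  then show ?thesis
    unfolding prod_mset_linear_factors minus_minus char_poly_multipartite_dist_mat N by (simp only:)
qed

section \<open>Distances in the non-commuting graph\<close>

lemma nc_walk_singleton: "nc_walk G [x] \<longleftrightarrow> x \<in> nc_vertices G"
  by (simp add: nc_walk_def)

lemma nc_walk_Cons_Cons: "nc_walk G (x # y # xs) \<longleftrightarrow> nc_adj G x y \<and> nc_walk G (y # xs)"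
  by (auto simp: nc_walk_def All_less_Suc2 nc_adj_def)

lemma nc_walk_nonempty: "nc_walk G xs \<Longrightarrow> xs \<noteq> []"
  by (simp add: nc_walk_def)

lemma nc_dist_eqI:
  assumes "nc_walk G xs" "hd xs = x" "last xs = y" "length xs = Suc d"
    and "\<And>xs. nc_walk G xs \<Longrightarrow> hd xs = x \<Longrightarrow> last xs = y \<Longrightarrow> Suc d \<le> length xs"
  shows "nc_dist G x y = d"
  unfolding nc_dist_def using assms by (intro Least_equality) force+

lemma hd_eq_last_if_length_1: "length xs = 1 \<Longrightarrow> hd xs = last xs"
  by (auto simp: length_Suc_conv)

lemma nc_walk_length_2_adj: "nc_walk G xs \<Longrightarrow> length xs = 2 \<Longrightarrow> nc_adj G (hd xs) (last xs)"
  by (auto simp: length_Suc_conv numeral_2_eq_2 nc_walk_Cons_Cons)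

lemma nc_dist_self: "x \<in> nc_vertices G \<Longrightarrow> nc_dist G x x = 0"
  by (rule nc_dist_eqI[of G "[x]"]) (auto simp: nc_walk_singleton Suc_le_eq dest: nc_walk_nonempty)

lemma nc_dist_adj:
  assumes "nc_adj G x y"
  shows "nc_dist G x y = 1"
proof (rule nc_dist_eqI[of G "[x, y]"])
  show "nc_walk G [x, y]"
    using assms by (simp add: nc_walk_Cons_Cons nc_walk_singleton nc_adj_def)
  fix xs assume xs: "nc_walk G xs" "hd xs = x" "last xs = y"
  have "length xs \<noteq> 0" "length xs \<noteq> 1"
    using xs assms nc_walk_nonempty[OF xs(1)] hd_eq_last_if_length_1[of xs] by (auto simp: nc_adj_def)
  then show "Suc 1 \<le> length xs"
    by linarith
qed simp_all

lemma nc_dist_common_neighbour: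
  assumes "nc_adj G x z" "nc_adj G z y" "x \<noteq> y" "\<not> nc_adj G x y"
  shows "nc_dist G x y = 2"
proof (rule nc_dist_eqI[of G "[x, z, y]"])
  show "nc_walk G [x, z, y]"
    using assms by (simp add: nc_walk_Cons_Cons nc_walk_singleton nc_adj_def)
  fix xs assume xs: "nc_walk G xs" "hd xs = x" "last xs = y"
  have "length xs \<noteq> 0" "length xs \<noteq> 1" "length xs \<noteq> 2"
    using xs assms nc_walk_nonempty[OF xs(1)] hd_eq_last_if_length_1[of xs] nc_walk_length_2_adj[OF xs(1)] by auto
  then show "Suc 2 \<le> length xs"
    by linarith
qed simp_all

lemma nc_dist_commuting_classes:
  fixes cls :: "'g \<Rightarrow> 'c"
  assumes commute_iff: "\<And>x y. x \<in> nc_vertices G \<Longrightarrow> y \<in> nc_vertices G \<Longrightarrow>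
      x \<otimes>\<^bsub>G\<^esub> y = y \<otimes>\<^bsub>G\<^esub> x \<longleftrightarrow> cls x = cls y"
    and other_class: "\<And>x. x \<in> nc_vertices G \<Longrightarrow> \<exists>z \<in> nc_vertices G. cls z \<noteq> cls x"
    and x: "x \<in> nc_vertices G" and y: "y \<in> nc_vertices G"
  shows "nc_dist G x y = (if x = y then 0 else if cls x = cls y then 2 else 1)"
proof -
  have adj_iff: "nc_adj G u v \<longleftrightarrow> u \<noteq> v \<and> cls u \<noteq> cls v"
    if "u \<in> nc_vertices G" "v \<in> nc_vertices G" for u v
    using that commute_iff by (auto simp: nc_adj_def)
  show ?thesis
  proof (cases "x = y")
    case True
    then show ?thesis using x by (simp add: nc_dist_self)
  next
    case False
    show ?thesis
    proof (cases "cls x = cls y")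
      case True
      obtain z where z: "z \<in> nc_vertices G" "cls z \<noteq> cls x"
        using other_class[OF x] by blast
      have "nc_dist G x y = 2"
        using z x y True \<open>x \<noteq> y\<close> by (intro nc_dist_common_neighbour[of G x z y]) (auto simp: adj_iff)
      then show ?thesis using True False by simp
    next
      case False
      then show ?thesis using x y \<open>x \<noteq> y\<close> by (simp add: nc_dist_adj adj_iff)
    qed
  qed
qed

lemma nc_dist_matrix_commuting_classes:
  fixes cls :: "'g \<Rightarrow> nat"
  assumes commute_iff: "\<And>x y. x \<in> nc_vertices G \<Longrightarrow> y \<in> nc_vertices G \<Longrightarrow>
      x \<otimes>\<^bsub>G\<^esub> y = y \<otimes>\<^bsub>G\<^esub> x \<longleftrightarrow> cls x = cls y"
    and other_class: "\<And>x. x \<in> nc_vertices G \<Longrightarrow> \<exists>z \<in> nc_vertices G. cls z \<noteq> cls x"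
    and f: "bij_betw f {..<N} (nc_vertices G)"
  shows "nc_dist_matrix G N f = multipartite_dist_mat N (cls \<circ> f)"
proof (rule eq_matI)
  fix i j assume "i < dim_row (multipartite_dist_mat N (cls \<circ> f))" "j < dim_col (multipartite_dist_mat N (cls \<circ> f))"
  then have i: "i < N" and j: "j < N"
    by (auto simp: multipartite_dist_mat_def)
  have "f i \<in> nc_vertices G" "f j \<in> nc_vertices G" "f i = f j \<longleftrightarrow> i = j"
    using f i j by (auto simp: bij_betw_def inj_on_eq_iff)
  then show "nc_dist_matrix G N f $$ (i, j) = multipartite_dist_mat N (cls \<circ> f) $$ (i, j)"
    using i j nc_dist_commuting_classes[OF commute_iff other_class]
    by (simp add: nc_dist_matrix_def multipartite_dist_mat_def)
qed (simp_all add: nc_dist_matrix_def multipartite_dist_mat_def)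

lemma card_Collect_bij_betw:
  assumes "bij_betw f {..<N} V"
  shows "card {i. i < N \<and> P (f i)} = card {x \<in> V. P x}"
proof -
  have "f ` {i. i < N \<and> P (f i)} = {x \<in> V. P x}"
    using assms by (auto simp: bij_betw_def)
  moreover have "inj_on f {i. i < N \<and> P (f i)}"
    using assms by (auto simp: bij_betw_def intro: inj_on_subset)
  ultimately show ?thesis
    using card_image by fastforce
qed

section \<open>The group \<open>U\<^sub>6\<^sub>n\<close>\<close>

lemma (in group) nat_pow_mod_order:
  assumes "x \<in> carrier G" "x [^] q = \<one>"
  shows "x [^] (k::nat) = x [^] (k mod q)"
proof -
  have "x [^] k = (x [^] q) [^] (k div q) \<otimes> x [^] (k mod q)"
    using assms(1) by (simp add: nat_pow_mult nat_pow_pow)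
  then show ?thesis
    using assms by simp
qed

lemma two_pow_mod_3: "(2::nat) ^ m mod 3 = (if even m then 1 else 2)"
proof (induction m)
  case (Suc m)
  have "(2::nat) ^ Suc m mod 3 = 2 * (2 ^ m mod 3) mod 3"
    by (simp add: mod_mult_right_eq)
  then show ?case
    using Suc by auto
qed simp

lemma card_even_less: "card {k :: nat. k < 2 * n \<and> even k} = n"
proof -
  have "{k :: nat. k < 2 * n \<and> even k} = (\<lambda>i. 2 * i) ` {..<n}"
    by (auto elim!: evenE)
  then show ?thesis
    by (simp add: card_image inj_on_def)
qed

lemma card_odd_less: "card {k :: nat. k < 2 * n \<and> odd k} = n"
proof -
  have "{k :: nat. k < 2 * n \<and> odd k} = (\<lambda>i. 2 * i + 1) ` {..<n}"
    by (auto elim!: oddE)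
  then show ?thesis
    by (simp add: card_image inj_on_def)
qed

locale U6n = group G for G (structure) +
  fixes a b :: 'a and n :: nat
  assumes n_pos: "n \<ge> 1"
    and a_closed [simp]: "a \<in> carrier G" and b_closed [simp]: "b \<in> carrier G"
    and generate_ab: "carrier G = generate G {a, b}"
    and a_order: "a [^] (2 * n) = \<one>" and b_order: "b [^] (3::nat) = \<one>"
    and a_conj_b: "inv a \<otimes> b \<otimes> a = inv b"
    and card_carrier: "card (carrier G) = 6 * n"
begin

definition ab_word :: "nat \<times> nat \<Rightarrow> 'a" where
  "ab_word p = a [^] fst p \<otimes> b [^] snd p"

definition exponents :: "(nat \<times> nat) set" where
  "exponents = {..<2 * n} \<times> {..<3}"

lemma ab_word_closed [simp]: "ab_word p \<in> carrier G"
  by (simp add: ab_word_def)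

lemma inv_b: "inv b = b [^] (2::nat)"
proof (rule inv_equality)
  have "b [^] (2::nat) \<otimes> b = b [^] (3::nat)"
    by (simp add: numeral_eq_Suc)
  then show "b [^] (2::nat) \<otimes> b = \<one>"
    using b_order by simp
qed simp_all

lemma inv_a: "inv a = a [^] (2 * n - 1)"
proof (rule inv_equality)
  have "Suc (2 * n - 1) = 2 * n"
    using n_pos by simp
  then show "a [^] (2 * n - 1) \<otimes> a = \<one>"
    by (metis nat_pow_Suc a_order)
qed simp_all

lemma b_pow_mult_a: "b [^] (j::nat) \<otimes> a = a \<otimes> b [^] (2 * j)"
proof (induction j)
  case (Suc j)
  have ba: "b \<otimes> a = a \<otimes> b [^] (2::nat)"
    using a_conj_b by (metis inv_b a_closed b_closed inv_closed m_assoc m_closed inv_solve_left)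
  have "b [^] Suc j \<otimes> a = (b [^] j \<otimes> a) \<otimes> b [^] (2::nat)"
    by (simp add: nat_pow_Suc2 m_assoc ba)
  also have "\<dots> = a \<otimes> b [^] (2 * Suc j)"
    by (simp add: Suc m_assoc nat_pow_mult)
  finally show ?case .
qed simp

lemma b_pow_mult_a_pow: "b [^] (j::nat) \<otimes> a [^] (m::nat) = a [^] m \<otimes> b [^] (j * 2 ^ m)"
proof (induction m arbitrary: j)
  case (Suc m)
  have "b [^] j \<otimes> a [^] Suc m = (b [^] j \<otimes> a [^] m) \<otimes> a"
    by (simp add: m_assoc)
  also have "\<dots> = a [^] m \<otimes> (b [^] (j * 2 ^ m) \<otimes> a)"
    by (simp add: Suc m_assoc)
  also have "\<dots> = a [^] Suc m \<otimes> b [^] (j * 2 ^ Suc m)"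
    by (simp add: b_pow_mult_a m_assoc[symmetric] mult_ac)
  finally show ?case .
qed simp

lemma ab_word_mult:
  "ab_word (k, j) \<otimes> ab_word (m, i) = ab_word ((k + m) mod (2 * n), (j * 2 ^ m + i) mod 3)"
proof -
  have "ab_word (k, j) \<otimes> ab_word (m, i) = a [^] k \<otimes> (b [^] j \<otimes> a [^] m) \<otimes> b [^] i"
    by (simp add: ab_word_def m_assoc)
  also have "\<dots> = a [^] k \<otimes> (a [^] m \<otimes> b [^] (j * 2 ^ m)) \<otimes> b [^] i"
    by (simp only: b_pow_mult_a_pow)
  also have "\<dots> = (a [^] k \<otimes> a [^] m) \<otimes> (b [^] (j * 2 ^ m) \<otimes> b [^] i)"
    by (simp add: m_assoc)
  also have "\<dots> = a [^] (k + m) \<otimes> b [^] (j * 2 ^ m + i)"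
    by (simp add: nat_pow_mult)
  also have "\<dots> = ab_word ((k + m) mod (2 * n), (j * 2 ^ m + i) mod 3)"
    unfolding ab_word_def fst_conv snd_conv
    by (simp only: nat_pow_mod_order[OF a_closed a_order, of "k + m"]
        nat_pow_mod_order[OF b_closed b_order, of "j * 2 ^ m + i"])
  finally show ?thesis .
qed

lemma ab_word_image_exponents: "ab_word ` exponents = carrier G"
proof
  have word_in: "ab_word (k, j) \<in> ab_word ` exponents" if "k < 2 * n" "j < 3" for k j
    using that by (auto simp: exponents_def)
  have closed: "ab_word (k, j) \<otimes> ab_word (m, i) \<in> ab_word ` exponents" for k j m i
    unfolding ab_word_mult using n_pos by (intro word_in) auto
  have inv_in: "inv a \<in> ab_word ` exponents" "inv b \<in> ab_word ` exponents"
    using word_in[of "2 * n - 1" 0] word_in[of 0 2] n_pos by (simp_all add: ab_word_def inv_a inv_b)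
  have gen_in: "a \<in> ab_word ` exponents" "b \<in> ab_word ` exponents" "\<one> \<in> ab_word ` exponents"
    using word_in[of 1 0] word_in[of 0 1] word_in[of 0 0] n_pos by (simp_all add: ab_word_def)
  show "carrier G \<subseteq> ab_word ` exponents"
  proof
    fix x assume "x \<in> carrier G"
    then have "x \<in> generate G {a, b}" using generate_ab by simp
    then show "x \<in> ab_word ` exponents"
    proof (induction rule: generate.induct)
      case one
      show ?case using gen_in by simp
    next
      case (incl h)
      then show ?case using gen_in by auto
    next
      case (inv h)
      then show ?case using inv_in by auto
    next
      case (eng h1 h2)
      then show ?case using closed by auto
    qed
  qed
qed auto

lemma bij_ab_word: "bij_betw ab_word exponents (carrier G)"
proof -
  have "inj_on ab_word exponents"
    by (rule eq_card_imp_inj_on)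
      (simp_all add: exponents_def ab_word_image_exponents[unfolded exponents_def] card_carrier card_cartesian_product)
  then show ?thesis
    using ab_word_image_exponents by (simp add: bij_betw_def)
qed

lemma ab_word_eq_iff: "p \<in> exponents \<Longrightarrow> q \<in> exponents \<Longrightarrow> ab_word p = ab_word q \<longleftrightarrow> p = q"
  using bij_ab_word by (auto simp: bij_betw_def inj_on_eq_iff)

lemma ab_word_commute_iff:
  assumes "(k, j) \<in> exponents" "(m, i) \<in> exponents"
  shows "ab_word (k, j) \<otimes> ab_word (m, i) = ab_word (m, i) \<otimes> ab_word (k, j) \<longleftrightarrow>
    (j * (if even m then 1 else 2) + i) mod 3 = (i * (if even k then 1 else 2) + j) mod 3"
proof -
  have two_pow: "(x * 2 ^ e + y) mod 3 = (x * (if even e then 1 else 2) + y) mod 3" for x e y :: nat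
  proof -
    have "(x * 2 ^ e + y) mod 3 = (x * (2 ^ e mod 3) mod 3 + y) mod 3"
      by (simp add: mod_add_left_eq mod_mult_right_eq)
    then show ?thesis
      by (simp add: two_pow_mod_3 mod_add_left_eq)
  qed
  have "ab_word (k, j) \<otimes> ab_word (m, i) = ab_word (m, i) \<otimes> ab_word (k, j) \<longleftrightarrow>
      (j * 2 ^ m + i) mod 3 = (i * 2 ^ k + j) mod 3"
    using n_pos by (simp add: ab_word_mult ab_word_eq_iff exponents_def add.commute)
  then show ?thesis
    by (simp only: two_pow)
qed

lemma ab_word_central_iff:
  assumes kj: "(k, j) \<in> exponents"
  shows "ab_word (k, j) \<in> grp_centre G \<longleftrightarrow> even k \<and> j = 0"
proof
  assume central: "ab_word (k, j) \<in> grp_centre G"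
  have a_b: "(1, 0) \<in> exponents" "(0, 1) \<in> exponents"
    using n_pos by (auto simp: exponents_def)
  then have "ab_word (1, 0) \<otimes> ab_word (k, j) = ab_word (k, j) \<otimes> ab_word (1, 0)"
    "ab_word (0, 1) \<otimes> ab_word (k, j) = ab_word (k, j) \<otimes> ab_word (0, 1)"
    using central by (auto simp: grp_centre_def)
  then have "j mod 3 = (j * 2) mod 3" "((if even k then 1 else 2) + j) mod 3 = (j + 1) mod 3"
    using ab_word_commute_iff[OF a_b(1) kj] ab_word_commute_iff[OF a_b(2) kj] by simp_all
  moreover have "j = 0 \<or> j = 1 \<or> j = 2"
    using kj by (auto simp: exponents_def)
  ultimately show "even k \<and> j = 0"
    by (cases "even k") auto
next
  assume "even k \<and> j = 0"
  then have "ab_word (m, i) \<otimes> ab_word (k, j) = ab_word (k, j) \<otimes> ab_word (m, i)"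
    if "(m, i) \<in> exponents" for m i
    using ab_word_commute_iff[OF that kj] by simp
  then show "ab_word (k, j) \<in> grp_centre G"
    using kj by (auto simp: grp_centre_def simp flip: ab_word_image_exponents)
qed

definition exponent_class :: "nat \<times> nat \<Rightarrow> nat" where
  "exponent_class p = (if even (fst p) then 0 else Suc (snd p))"

definition comm_class :: "'a \<Rightarrow> nat" where
  "comm_class x = exponent_class (the_inv_into exponents ab_word x)"

lemma comm_class_ab_word: "p \<in> exponents \<Longrightarrow> comm_class (ab_word p) = exponent_class p"
  using bij_ab_word by (simp add: comm_class_def bij_betw_def the_inv_into_f_f)

lemma nc_vertices_eq: "nc_vertices G = ab_word ` {(k, j) \<in> exponents. \<not> (even k \<and> j = 0)}"
proof -
  have "nc_vertices G = {x \<in> ab_word ` exponents. x \<notin> grp_centre G}"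
    by (auto simp: nc_vertices_def ab_word_image_exponents)
  then show ?thesis
    using ab_word_central_iff by auto
qed

lemma commute_iff_same_class:
  assumes "x \<in> nc_vertices G" "y \<in> nc_vertices G"
  shows "x \<otimes> y = y \<otimes> x \<longleftrightarrow> comm_class x = comm_class y"
proof -
  obtain k j m i where kj: "(k, j) \<in> exponents" "\<not> (even k \<and> j = 0)" "x = ab_word (k, j)"
    and mi: "(m, i) \<in> exponents" "\<not> (even m \<and> i = 0)" "y = ab_word (m, i)"
    using assms by (auto simp: nc_vertices_eq)
  have "j = 0 \<or> j = 1 \<or> j = 2" "i = 0 \<or> i = 1 \<or> i = 2"
    using kj mi by (auto simp: exponents_def)
  then show ?thesis
    using kj mi ab_word_commute_iff[OF kj(1) mi(1)]
    by (cases "even k"; cases "even m") (auto simp: comm_class_ab_word exponent_class_def)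
qed

lemma comm_class_less: "x \<in> nc_vertices G \<Longrightarrow> comm_class x < 4"
  by (auto simp: nc_vertices_eq comm_class_ab_word exponent_class_def exponents_def)

lemma exists_other_class:
  assumes "x \<in> nc_vertices G"
  shows "\<exists>z \<in> nc_vertices G. comm_class z \<noteq> comm_class x"
proof -
  have "(1, 0) \<in> exponents" "(0, 1) \<in> exponents"
    using n_pos by (auto simp: exponents_def)
  then have "ab_word (1, 0) \<in> nc_vertices G" "ab_word (0, 1) \<in> nc_vertices G"
    "comm_class (ab_word (1, 0)) = 1" "comm_class (ab_word (0, 1)) = 0"
    by (auto simp: nc_vertices_eq comm_class_ab_word exponent_class_def)
  then show ?thesis
    by (metis zero_neq_one)
qed

lemma card_comm_class:
  assumes "c < 4"
  shows "card {x \<in> nc_vertices G. comm_class x = c} = (if c = 0 then 2 * n else n)"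
proof -
  let ?P = "{(k, j) \<in> exponents. \<not> (even k \<and> j = 0) \<and> exponent_class (k, j) = c}"
  have "{x \<in> nc_vertices G. comm_class x = c} = ab_word ` ?P"
    by (auto simp: nc_vertices_eq comm_class_ab_word)
  moreover have "inj_on ab_word ?P"
    using bij_ab_word by (auto simp: bij_betw_def intro: inj_on_subset)
  ultimately have "card {x \<in> nc_vertices G. comm_class x = c} = card ?P"
    by (simp add: card_image)
  also have "\<dots> = (if c = 0 then 2 * n else n)"
  proof (cases "c = 0")
    case True
    then have "?P = {k. k < 2 * n \<and> even k} \<times> {1, 2}"
      by (auto simp: exponents_def exponent_class_def)
    then show ?thesis
      using True by (simp add: card_cartesian_product card_even_less)
  next
    case False
    then have "?P = {k. k < 2 * n \<and> odd k} \<times> {c - 1}"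
      using assms by (auto simp: exponents_def exponent_class_def)
    then show ?thesis
      using False by (simp add: card_cartesian_product card_odd_less)
  qed
  finally show ?thesis .
qed

end

theorem theorem5p1:
  fixes G :: "'g monoid" and a b :: 'g and n :: nat and f :: "nat \<Rightarrow> 'g"
  assumes "group G"
    and "n \<ge> 1"
    and "a \<in> carrier G" and "b \<in> carrier G"
    and "carrier G = generate G {a, b}"
    and "a [^]\<^bsub>G\<^esub> (2 * n) = \<one>\<^bsub>G\<^esub>"
    and "b [^]\<^bsub>G\<^esub> (3::nat) = \<one>\<^bsub>G\<^esub>"
    and "inv\<^bsub>G\<^esub> a \<otimes>\<^bsub>G\<^esub> b \<otimes>\<^bsub>G\<^esub> a = inv\<^bsub>G\<^esub> b"
    and "finite (carrier G)" and "card (carrier G) = 6 * n"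
    and "bij_betw f {..<card (nc_vertices G)} (nc_vertices G)"
  shows "char_poly (nc_dist_matrix G (card (nc_vertices G)) f) =
    (\<Prod>x\<in>#replicate_mset (5 * n - 4) (-2)
          + replicate_mset 2 (real n - 2)
          + {# (4 * real n - 2) + real n * sqrt 6, (4 * real n - 2) - real n * sqrt 6 #}.
       [:- x, 1:])"
proof -
  interpret U6n G a b n
    by (intro U6n.intro U6n_axioms.intro) (use assms in auto)
  let ?N = "card (nc_vertices G)"
  have dist: "nc_dist_matrix G ?N f = multipartite_dist_mat ?N (comm_class \<circ> f)"
    using commute_iff_same_class exists_other_class assms(11) by (rule nc_dist_matrix_commuting_classes)
  have "(comm_class \<circ> f) i < 4" if "i < ?N" for i
    using assms(11) that comm_class_less by (auto simp: bij_betw_def)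
  moreover have "card {i. i < ?N \<and> (comm_class \<circ> f) i = c} = (if c = 0 then 2 * n else n)" if "c < 4" for c
    using card_Collect_bij_betw[OF assms(11), of "\<lambda>x. comm_class x = c"] card_comm_class[OF that] by simp
  ultimately show ?thesis
    unfolding dist by (rule char_poly_multipartite_dist_mat_2m_m_m_m[OF \<open>n \<ge> 1\<close>])
qed

end
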